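(* Consider Algorithm 3 (see context) run on any arrival sequence, and let $C_{\min}=\min_l C_l$. Whenever a packet $m$ is scheduled, let $\Delta D$ be the resulting increase in the dual objective $\sum_{m'}\alpha_{m'}+\sum_{l,t}C_l\beta_{lt}$, which increases by $\alpha_m$ plus the changes in $C_l\beta_{lt}$ for $(l,t)\in k^*$. The corresponding increase of the primal objective $\sum_{m,k}X_{mk}$ is $1$. Then $$\Delta D\le 2(\ln L+1)+\frac{B}{C_{\min}},$$ where $B<\infty$ is a constant that depends on $L$ but not on $C_{\min}$.
   Context: Network model. The network is a directed graph with a finite set $\mathcal L$ of links. Each link $l$ has an integer capacity $C_l\ge1$ (packets per time slot). Time is slotted, $t=1,2,\dots$. $\mathcal M$ is a finite set of packets. Packet $m$ has a source node $s_m$, a destination node $\mathrm{dst}_m$, an arrival slot $a_m$ and a deadline slot $f_m$. Valid schedules. A valid schedule for $m$ is a set $k=\{(l_1,t_1),\dots,(l_j,t_j)\}$ of (link, slot) pairs satisfying two conditions: $l_1,\dots,l_j$ form a directed path from $s_m$ to $\mathrm{dst}_m$, and $a_m\le t_1<t_2<\dots<t_j\le f_m$. $V(m)$ denotes the set of valid schedules of $m$. $L\ge1$ is an integer with $|k|\le L$ for all $m\in\mathcal M$, $k\in V(m)$. Define the function $$g_L(x)=\begin{cases}\dfrac{e^{x}-1}{L\,(e^{1/(\ln L+1)}-1)}, & 0\le x\le \frac{1}{\ln L+1},\\[2mm] e^{(x-1)(\ln L+1)}, & x\ge\frac{1}{\ln L+1}.\end{cases}$$ Algorithm 3. 1. Initialize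 all $\alpha_m,X_{mk}$ to $0$. For each link $l$ and slot $t$, let $n_{lt}$ be the number of packets scheduled so far on $(l,t)$ (initially $0$), and maintain $\beta_{lt}=g_L(n_{lt}/C_l)$ (initially $0$). 2. For each arriving packet $m$ in order: - Let $k^*\in\arg\max_{k\in V(m)}\big(1-\sum_{(l,t)\in k}\beta_{lt}\big)$. - If $1-\sum_{(l,t)\in k^*}\beta_{lt}>0$, do the following. Set $\alpha_m=1-\sum_{(l,t)\in k^*}\beta_{lt}$, using current values. For each $(l,t)\in k^*$ increment $n_{lt}$ by one and reset $\beta_{lt}=g_L(n_{lt}/C_l)$. Set $X_{mk^*}=1$, and transmit $m$ along $k^*$. - Otherwise, drop $m$. *)

theory Defs
  imports Complex_Main
begin

(* Links are identified by natural numbers; link l goes from vertex lsrc l to vertex ldst l.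
   Vertices are natural numbers.  A packet is (source, destination, arrival slot, deadline slot). *)
type_synonym packet = "nat \<times> nat \<times> nat \<times> nat"

definition pk_src :: "packet \<Rightarrow> nat" where "pk_src p = fst p"
definition pk_dst :: "packet \<Rightarrow> nat" where "pk_dst p = fst (snd p)"
definition pk_arr :: "packet \<Rightarrow> nat" where "pk_arr p = fst (snd (snd p))"
definition pk_dl  :: "packet \<Rightarrow> nat" where "pk_dl p = snd (snd (snd p))"

definition gL :: "nat \<Rightarrow> real \<Rightarrow> real" where
  "gL L x = (if x \<le> 1 / (ln (real L) + 1)
             then (exp x - 1) / (real L * (exp (1 / (ln (real L) + 1)) - 1))
             else exp ((x - 1) * (ln (real L) + 1)))"

definition is_dpath :: "nat set \<Rightarrow> (nat \<Rightarrow> nat) \<Rightarrow> (nat \<Rightarrow> nat) \<Rightarrow> nat \<Rightarrow> nat \<Rightarrow> nat list \<Rightarrow> bool" where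
  "is_dpath Ls lsrc ldst s d ls \<longleftrightarrow>
     ls \<noteq> [] \<and> set ls \<subseteq> Ls \<and> lsrc (hd ls) = s \<and> ldst (last ls) = d \<and>
     (\<forall>i. Suc i < length ls \<longrightarrow> ldst (ls ! i) = lsrc (ls ! Suc i)) \<and>
     distinct (s # map ldst ls)"

definition valid_scheds :: "nat set \<Rightarrow> (nat \<Rightarrow> nat) \<Rightarrow> (nat \<Rightarrow> nat) \<Rightarrow> packet \<Rightarrow> (nat \<times> nat) set set" where
  "valid_scheds Ls lsrc ldst p =
     {k. \<exists>ls ts. length ts = length ls \<and> is_dpath Ls lsrc ldst (pk_src p) (pk_dst p) ls \<and>
                 sorted_wrt (<) ts \<and> (\<forall>t\<in>set ts. pk_arr p \<le> t \<and> t \<le> pk_dl p) \<and>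
                 k = set (zip ls ts)}"

definition beta :: "nat \<Rightarrow> (nat \<Rightarrow> nat) \<Rightarrow> (nat \<Rightarrow> nat \<Rightarrow> nat) \<Rightarrow> nat \<Rightarrow> nat \<Rightarrow> real" where
  "beta L C n l t = gL L (real (n l t) / real (C l))"

definition sched_value :: "nat \<Rightarrow> (nat \<Rightarrow> nat) \<Rightarrow> (nat \<Rightarrow> nat \<Rightarrow> nat) \<Rightarrow> (nat \<times> nat) set \<Rightarrow> real" where
  "sched_value L C n k = 1 - (\<Sum>(l,t)\<in>k. beta L C n l t)"

definition incr :: "(nat \<Rightarrow> nat \<Rightarrow> nat) \<Rightarrow> (nat \<times> nat) set \<Rightarrow> (nat \<Rightarrow> nat \<Rightarrow> nat)" where
  "incr n k = (\<lambda>l t. if (l, t) \<in> k then Suc (n l t) else n l t)"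

(* alg_reach ... ps n : after Algorithm 3 has processed the packets ps (in order, with some
   admissible tie-breaking in the argmax), the counters are n. *)
inductive alg_reach :: "nat \<Rightarrow> nat set \<Rightarrow> (nat \<Rightarrow> nat) \<Rightarrow> (nat \<Rightarrow> nat) \<Rightarrow> (nat \<Rightarrow> nat)
                        \<Rightarrow> packet list \<Rightarrow> (nat \<Rightarrow> nat \<Rightarrow> nat) \<Rightarrow> bool"
  for L Ls lsrc ldst C where
  init: "alg_reach L Ls lsrc ldst C [] (\<lambda>l t. 0)"
| sched: "alg_reach L Ls lsrc ldst C ps n \<Longrightarrow> k \<in> valid_scheds Ls lsrc ldst p \<Longrightarrow>
          (\<forall>k'\<in>valid_scheds Ls lsrc ldst p. sched_value L C n k' \<le> sched_value L C n k) \<Longrightarrow>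
          sched_value L C n k > 0 \<Longrightarrow>
          alg_reach L Ls lsrc ldst C (ps @ [p]) (incr n k)"
| drop: "alg_reach L Ls lsrc ldst C ps n \<Longrightarrow>
          \<not> (\<exists>k\<in>valid_scheds Ls lsrc ldst p. sched_value L C n k > 0) \<Longrightarrow>
          alg_reach L Ls lsrc ldst C (ps @ [p]) n"

(* increase of the dual objective when scheduling along k with counters n:
   alpha_m plus the changes of C_l beta_{lt} for (l,t) in k *)
definition dual_increase :: "nat \<Rightarrow> (nat \<Rightarrow> nat) \<Rightarrow> (nat \<Rightarrow> nat \<Rightarrow> nat) \<Rightarrow> (nat \<times> nat) set \<Rightarrow> real" where
  "dual_increase L C n k = sched_value L C n k +
     (\<Sum>(l,t)\<in>k. real (C l) * (beta L C (incr n k) l t - beta L C n l t))"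

end

theory Submission
  imports Defs "HOL-Analysis.Convex"
begin

text \<open>
  Write c = ln L + 1. On both pieces of g_L the derivative is at most c (g_L + 1/L), and the
  pieces meet continuously at 1/c with value 1/L, so g_L + 1/L grows at most like exp (c y).
  One more packet on link l moves the argument of beta_lt by 1/C_l, hence
  C_l * (increase of beta_lt) <= (beta_lt + 1/L) * C_l * (exp (c/C_l) - 1) <= c beta_lt + c/L + O(1/C_l).
  Summing over the at most L hops of k* and adding alpha_m = 1 - sum beta, where sum beta < 1,
  gives 2c + O(L/C_min).
\<close>

lemma exp_minus_one_le_quadratic:
  fixes t :: real
  assumes "0 \<le> t"
  shows "exp t - 1 \<le> t + t^2 * exp t"
proof -
  have "exp t * (1 - t) \<le> exp t * exp (- t)"
    using exp_ge_add_one_self[of "- t"] by (intro mult_left_mono) auto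
  hence "exp t * (1 - t) \<le> 1" by (simp add: exp_minus_inverse)
  hence "exp t * (1 - t) * (1 + t) \<le> 1 + t" using assms by (simp add: mult_right_le_one_le)
  thus ?thesis by (simp add: algebra_simps power2_eq_square)
qed

lemma exp_minus_one_scale_le:
  fixes c d :: real
  assumes "1 \<le> c" "0 \<le> d"
  shows "c * (exp d - 1) \<le> exp (c * d) - 1"
proof -
  have "exp ((1 - 1/c) *\<^sub>R 0 + (1/c) *\<^sub>R (c * d)) \<le> (1 - 1/c) * exp 0 + (1/c) * exp (c * d)"
    using assms by (intro convex_onD[OF exp_convex]) auto
  hence "exp d \<le> 1 - 1/c + exp (c * d) / c" using assms by simp
  hence "c * exp d \<le> c * (1 - 1/c + exp (c * d) / c)" using assms by simp
  thus ?thesis using assms by (simp add: algebra_simps)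
qed

lemma gL_below_threshold:
  "x \<le> 1 / (ln (real L) + 1) \<Longrightarrow>
     gL L x = (exp x - 1) / (real L * (exp (1 / (ln (real L) + 1)) - 1))"
  by (simp add: gL_def)

lemma gL_above_threshold:
  assumes "L \<ge> 1" and "1 / (ln (real L) + 1) \<le> x"
  shows "gL L x = exp ((x - 1) * (ln (real L) + 1))"
proof (cases "x = 1 / (ln (real L) + 1)")
  case True
  define c where "c = ln (real L) + 1"
  have c: "c \<ge> 1" using assms by (simp add: c_def)
  have "(1 / c - 1) * c = - ln (real L)" using c by (simp add: c_def algebra_simps)
  hence "exp ((1 / c - 1) * c) = 1 / real L" using assms by (simp add: exp_minus inverse_eq_divide)
  moreover have "exp (1 / c) - 1 > 0" using c by simp
  ultimately show ?thesis using True assms by (simp add: gL_def c_def[symmetric])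
qed (use assms in \<open>simp add: gL_def\<close>)

lemma gL_nonneg:
  assumes "L \<ge> 1" and "0 \<le> x"
  shows "0 \<le> gL L x"
proof -
  have "0 < ln (real L) + 1" using assms by (simp add: add_nonneg_pos)
  hence "0 < exp (1 / (ln (real L) + 1)) - 1" by simp
  thus ?thesis using assms by (simp add: gL_def)
qed

lemma gL_growth_below_threshold:
  assumes L: "L \<ge> 1" and xy: "0 \<le> x" "x \<le> y" and ya: "y \<le> 1 / (ln (real L) + 1)"
  shows "gL L y + 1 / real L \<le> (gL L x + 1 / real L) * exp ((ln (real L) + 1) * (y - x))"
proof -
  define c where "c = ln (real L) + 1"
  define E where "E = exp (1 / c) - 1"
  define u where "u = exp x"
  define v where "v = exp (y - x) - 1"
  define w where "w = exp (c * (y - x)) - 1"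
  have c: "c \<ge> 1" using L by (simp add: c_def)
  have E: "1 / c \<le> E" unfolding E_def using exp_ge_add_one_self[of "1 / c"] by linarith
  have E_pos: "0 < E" using E c by (smt (verit) divide_pos_pos)
  have u: "1 \<le> u" using xy by (simp add: u_def)
  have vw: "c * v \<le> w" using exp_minus_one_scale_le[OF c, of "y - x"] xy by (simp add: v_def w_def)
  have v: "0 \<le> v" using xy by (simp add: v_def)
  have "v \<le> w" using vw c v by (smt (verit) mult_le_cancel_right1)
  hence "(u - 1) * v \<le> (u - 1) * w" using u by (simp add: mult_left_mono)
  moreover have "v \<le> w / c" using vw c by (simp add: field_simps)
  moreover have "w / c \<le> E * w" using mult_right_mono[OF E, of w] v \<open>v \<le> w\<close> by simp
  \<comment> \<open>the claim times L E, since g_L z + 1/L = (exp z - 1 + E) / (L E) below the threshold\<close>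
  ultimately have key: "u * (v + 1) - 1 + E \<le> (u - 1 + E) * (w + 1)"
    by (simp add: algebra_simps)
  have eq: "gL L z + 1 / real L = (exp z - 1 + E) / (real L * E)" if "z \<le> 1 / c" for z
  proof -
    have "gL L z = (exp z - 1) / (real L * E)"
      using gL_below_threshold[of z L] that by (simp add: c_def E_def)
    thus ?thesis using E_pos by (simp add: add_divide_distrib)
  qed
  have "exp y = u * (v + 1)" by (simp add: u_def v_def flip: exp_add)
  hence "gL L y + 1 / real L = (u * (v + 1) - 1 + E) / (real L * E)"
    using eq ya by (simp add: c_def)
  also have "\<dots> \<le> (u - 1 + E) * (w + 1) / (real L * E)"
    using key L E_pos by (intro divide_right_mono) auto
  also have "\<dots> = (gL L x + 1 / real L) * exp (c * (y - x))"
    using eq[of x] xy ya by (simp add: u_def w_def c_def)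
  finally show ?thesis by (simp add: c_def)
qed

lemma gL_growth_above_threshold:
  assumes L: "L \<ge> 1" and xa: "1 / (ln (real L) + 1) \<le> x" and xy: "x \<le> y"
  shows "gL L y + 1 / real L \<le> (gL L x + 1 / real L) * exp ((ln (real L) + 1) * (y - x))"
proof -
  define c where "c = ln (real L) + 1"
  have "gL L y = gL L x * exp (c * (y - x))"
    using gL_above_threshold[OF L xa] gL_above_threshold[OF L order.trans[OF xa xy]]
    by (simp add: c_def algebra_simps flip: exp_add)
  moreover have "1 \<le> exp (c * (y - x))" using L xy by (simp add: c_def)
  hence "1 / real L \<le> 1 / real L * exp (c * (y - x))"
    using divide_right_mono[of 1 "exp (c * (y - x))" "real L"] by simp
  ultimately have "gL L y + 1 / real L \<le> (gL L x + 1 / real L) * exp (c * (y - x))"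
    by (simp add: distrib_right)
  thus ?thesis by (simp add: c_def)
qed

lemma gL_growth:
  assumes L: "L \<ge> 1" and xy: "0 \<le> x" "x \<le> y"
  shows "gL L y + 1 / real L \<le> (gL L x + 1 / real L) * exp ((ln (real L) + 1) * (y - x))"
proof -
  define a where "a = 1 / (ln (real L) + 1)"
  consider "y \<le> a" | "a \<le> x" | "x \<le> a" "a \<le> y" by (metis linear order.trans xy(2))
  thus ?thesis
  proof cases
    case 3
    have "gL L y + 1 / real L \<le> (gL L a + 1 / real L) * exp ((ln (real L) + 1) * (y - a))"
      using gL_growth_above_threshold[OF L _ 3(2)] by (simp add: a_def)
    also have "\<dots> \<le> (gL L x + 1 / real L) * exp ((ln (real L) + 1) * (a - x))
                      * exp ((ln (real L) + 1) * (y - a))"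
      using gL_growth_below_threshold[OF L xy(1) 3(1)] by (intro mult_right_mono) (auto simp: a_def)
    finally show ?thesis by (simp add: algebra_simps flip: exp_add)
  qed (use gL_growth_below_threshold gL_growth_above_threshold assms in \<open>auto simp: a_def\<close>)
qed

lemma gL_increment_le:
  fixes C :: real
  assumes L: "L \<ge> 1" and C: "1 \<le> C" and x: "0 \<le> x" and gx: "gL L x \<le> 1"
  shows "C * (gL L (x + 1 / C) - gL L x)
           \<le> (ln (real L) + 1) * gL L x + (ln (real L) + 1) / real L
              + 2 * (ln (real L) + 1)^2 * exp (ln (real L) + 1) / C"
proof -
  define c where "c = ln (real L) + 1"
  define G where "G = gL L x + 1 / real L"
  define t where "t = c / C"
  have c: "1 \<le> c" using L by (simp add: c_def)
  have t: "0 \<le> t" "t \<le> c" using c C by (auto simp: t_def field_simps)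
  have "1 / real L \<le> 1" using L by simp
  hence G: "0 \<le> G" "G \<le> 2" using gL_nonneg[OF L x] gx by (auto simp: G_def)
  have "gL L (x + 1 / C) + 1 / real L \<le> G * exp t"
    using gL_growth[OF L x, of "x + 1 / C"] C by (simp add: G_def t_def c_def)
  hence "gL L (x + 1 / C) - gL L x \<le> G * (exp t - 1)"
    unfolding right_diff_distrib using G_def by linarith
  hence "C * (gL L (x + 1 / C) - gL L x) \<le> C * (G * (exp t - 1))"
    using C by (intro mult_left_mono) auto
  also have "\<dots> = G * (C * (exp t - 1))" by simp
  also have "C * (exp t - 1) \<le> c + c^2 * exp c / C"
  proof -
    have "C * (exp t - 1) \<le> C * (t + t^2 * exp c)"
      using exp_minus_one_le_quadratic[OF t(1)] mult_left_mono[of "exp t" "exp c" "t^2"] t C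
      by (intro mult_left_mono) auto
    also have "\<dots> = c + c^2 * exp c / C" using C by (simp add: t_def field_simps power2_eq_square)
    finally show ?thesis .
  qed
  hence "G * (C * (exp t - 1)) \<le> G * (c + c^2 * exp c / C)" using G by (intro mult_left_mono)
  also have "\<dots> = c * gL L x + c / real L + G * (c^2 * exp c / C)" by (simp add: G_def algebra_simps)
  also have "\<dots> \<le> c * gL L x + c / real L + 2 * (c^2 * exp c / C)"
    using G C by (intro add_left_mono mult_right_mono) auto
  finally show ?thesis by (simp add: c_def)
qed

lemma beta_incr_le:
  assumes L: "L \<ge> 1" and C: "1 \<le> C l" and lt: "(l, t) \<in> k" and b: "beta L C n l t \<le> 1"
  shows "real (C l) * (beta L C (incr n k) l t - beta L C n l t)
           \<le> (ln (real L) + 1) * beta L C n l t + (ln (real L) + 1) / real L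
              + 2 * (ln (real L) + 1)^2 * exp (ln (real L) + 1) / real (C l)"
proof -
  define x where "x = real (n l t) / real (C l)"
  have "beta L C (incr n k) l t = gL L (x + 1 / real (C l))"
    using lt C by (simp add: beta_def incr_def x_def add_divide_distrib add.commute)
  moreover have "beta L C n l t = gL L x" by (simp add: beta_def x_def)
  ultimately show ?thesis
    using gL_increment_le[OF L, of "real (C l)" x] C b by (simp add: x_def)
qed

lemma dual_increase_le:
  fixes Cmin :: real
  assumes L: "L \<ge> 1" and k: "finite k" "card k \<le> L"
    and Cmin: "1 \<le> Cmin" "\<And>l t. (l, t) \<in> k \<Longrightarrow> Cmin \<le> real (C l)"
    and pos: "0 < sched_value L C n k"
  shows "dual_increase L C n k
           \<le> 2 * (ln (real L) + 1) + real L * (2 * (ln (real L) + 1)^2 * exp (ln (real L) + 1)) / Cmin"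
proof -
  define c where "c = ln (real L) + 1"
  define K where "K = 2 * c^2 * exp c"
  define S where "S = (\<Sum>(l, t)\<in>k. beta L C n l t)"
  have c: "1 \<le> c" using L by (simp add: c_def)
  have K: "0 \<le> K" by (simp add: K_def)
  have beta_nonneg: "0 \<le> beta L C n l t" for l t by (simp add: beta_def gL_nonneg[OF L])
  have S: "0 \<le> S" "S < 1" using pos beta_nonneg by (auto simp: S_def sched_value_def intro: sum_nonneg)
  have beta_le_S: "beta L C n l t \<le> S" if "(l, t) \<in> k" for l t
    using member_le_sum[of "(l, t)" k "\<lambda>(l, t). beta L C n l t"] that k beta_nonneg
    by (auto simp: S_def)
  have link_bound: "real (C l) * (beta L C (incr n k) l t - beta L C n l t)
                \<le> c * beta L C n l t + (c / real L + K / Cmin)" if "(l, t) \<in> k" for l t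
  proof -
    have Cl: "1 \<le> C l" using Cmin that by fastforce
    hence "real (C l) * (beta L C (incr n k) l t - beta L C n l t)
             \<le> c * beta L C n l t + c / real L + K / real (C l)"
      using beta_incr_le[OF L _ that] beta_le_S[OF that] S by (simp add: c_def K_def)
    also have "K / real (C l) \<le> K / Cmin" using K Cmin Cl that by (intro divide_left_mono) auto
    finally show ?thesis by simp
  qed
  have "(\<Sum>(l, t)\<in>k. real (C l) * (beta L C (incr n k) l t - beta L C n l t))
          \<le> (\<Sum>(l, t)\<in>k. c * beta L C n l t + (c / real L + K / Cmin))"
    using link_bound by (intro sum_mono) auto
  also have "\<dots> = c * S + real (card k) * (c / real L + K / Cmin)"
    by (simp add: S_def sum.distrib sum_distrib_left case_prod_unfold)
  also have "\<dots> \<le> c * S + real L * (c / real L + K / Cmin)"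
    using k c K Cmin by (intro add_left_mono mult_right_mono) auto
  also have "\<dots> = c * S + c + real L * K / Cmin" using L by (simp add: field_simps)
  finally have "dual_increase L C n k \<le> 1 + (c - 1) * S + c + real L * K / Cmin"
    by (simp add: dual_increase_def sched_value_def S_def algebra_simps)
  also have "(c - 1) * S \<le> c - 1" using c S by (simp add: mult_left_le)
  finally show ?thesis by (simp add: c_def K_def)
qed

lemma valid_sched_finite: "k \<in> valid_scheds Ls lsrc ldst p \<Longrightarrow> finite k"
  by (auto simp: valid_scheds_def)

lemma valid_sched_links: "k \<in> valid_scheds Ls lsrc ldst p \<Longrightarrow> (l, t) \<in> k \<Longrightarrow> l \<in> Ls"
  by (auto simp: valid_scheds_def is_dpath_def dest: set_zip_leftD)

theorem lemma3:
  fixes L :: nat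
  assumes "L \<ge> 1"
  shows "\<exists>B::real. \<forall>Ls lsrc ldst C ms i n k.
           finite Ls \<and> Ls \<noteq> {} \<and> (\<forall>l\<in>Ls. C l \<ge> 1) \<and>
           (\<forall>p\<in>set ms. pk_arr p \<ge> 1) \<and>
           (\<forall>p\<in>set ms. \<forall>k'\<in>valid_scheds Ls lsrc ldst p. card k' \<le> L) \<and>
           i < length ms \<and>
           alg_reach L Ls lsrc ldst C (take i ms) n \<and>
           k \<in> valid_scheds Ls lsrc ldst (ms ! i) \<and>
           (\<forall>k'\<in>valid_scheds Ls lsrc ldst (ms ! i). sched_value L C n k' \<le> sched_value L C n k) \<and>
           sched_value L C n k > 0
           \<longrightarrow> dual_increase L C n k \<le> 2 * (ln (real L) + 1) + B / real (Min (C ` Ls))"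
proof (intro exI[of _ "real L * (2 * (ln (real L) + 1)^2 * exp (ln (real L) + 1))"] allI impI,
       elim conjE)
  fix Ls lsrc ldst C ms i n k
  assume Ls: "finite Ls" "Ls \<noteq> {}" "\<forall>l\<in>Ls. C l \<ge> 1"
    and card: "\<forall>p\<in>set ms. \<forall>k'\<in>valid_scheds Ls lsrc ldst p. card k' \<le> L"
    and i: "i < length ms" and k: "k \<in> valid_scheds Ls lsrc ldst (ms ! i)"
    and pos: "sched_value L C n k > 0"
  have "1 \<le> Min (C ` Ls)" using Ls by simp
  moreover have "Min (C ` Ls) \<le> C l" if "(l, t) \<in> k" for l t
    using Ls valid_sched_links[OF k that] by simp
  moreover have "card k \<le> L" using card nth_mem[OF i] k by blast
  ultimately show "dual_increase L C n k \<le> 2 * (ln (real L) + 1)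
      + real L * (2 * (ln (real L) + 1)^2 * exp (ln (real L) + 1)) / real (Min (C ` Ls))"
    using dual_increase_le[OF assms valid_sched_finite[OF k], where Cmin = "real (Min (C ` Ls))"] pos
    by simp
qed

end
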